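(* The theory $\mathsf{iGL}$ is closed under box-translation: for every modal proposition $A$, if $\mathsf{iGL}\vdash A$ then $\mathsf{iGL}\vdash A^\Box$.
   Context: Modal language: propositional variables, $\bot$, $\wedge,\vee,\to$, $\Box$; atomic = variables and $\bot$. $\mathsf{iGL}$: intuitionistic propositional logic in the modal language plus $\Box(A\to B)\to(\Box A\to\Box B)$, $\Box A\to\Box\Box A$, $\Box(\Box A\to A)\to\Box A$, closed under modus ponens and necessitation. Box-translation: $A^\Box:=A\wedge\Box A$ for atomic $A$; $(A\circ B)^\Box:=A^\Box\circ B^\Box$ for $\circ\in\{\wedge,\vee\}$; $(A\to B)^\Box:=(A^\Box\to B^\Box)\wedge\Box(A^\Box\to B^\Box)$; $(\Box A)^\Box:=\Box(A^\Box)$. *)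

theory Defs
  imports Main
begin

datatype fm =
    Var nat
  | Bot
  | And fm fm
  | Or fm fm
  | Imp fm fm
  | Box fm

inductive iGL :: "fm \<Rightarrow> bool" where
  ax_k1: "iGL (Imp A (Imp B A))"
| ax_s: "iGL (Imp (Imp A (Imp B C)) (Imp (Imp A B) (Imp A C)))"
| ax_and1: "iGL (Imp (And A B) A)"
| ax_and2: "iGL (Imp (And A B) B)"
| ax_andI: "iGL (Imp A (Imp B (And A B)))"
| ax_or1: "iGL (Imp A (Or A B))"
| ax_or2: "iGL (Imp B (Or A B))"
| ax_orE: "iGL (Imp (Imp A C) (Imp (Imp B C) (Imp (Or A B) C)))"
| ax_efq: "iGL (Imp Bot A)"
| ax_K: "iGL (Imp (Box (Imp A B)) (Imp (Box A) (Box B)))"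
| ax_4: "iGL (Imp (Box A) (Box (Box A)))"
| ax_L: "iGL (Imp (Box (Imp (Box A) A)) (Box A))"
| mp: "iGL (Imp A B) \<Longrightarrow> iGL A \<Longrightarrow> iGL B"
| nec: "iGL A \<Longrightarrow> iGL (Box A)"

fun boxtr :: "fm \<Rightarrow> fm" where
  "boxtr (Var p) = And (Var p) (Box (Var p))"
| "boxtr Bot = And Bot (Box Bot)"
| "boxtr (And A B) = And (boxtr A) (boxtr B)"
| "boxtr (Or A B) = Or (boxtr A) (boxtr B)"
| "boxtr (Imp A B) = And (Imp (boxtr A) (boxtr B)) (Box (Imp (boxtr A) (boxtr B)))"
| "boxtr (Box A) = Box (boxtr A)"

end

theory Submission
  imports Defs
begin

text \<open>Every translation \<open>A\<^sup>\<box>\<close> proves \<open>\<box>A\<^sup>\<box>\<close>: atoms and implications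
  are translated into formulas \<open>B \<and> \<box>B\<close>, for which axiom 4 suffices, and the
  remaining connectives preserve this property. Hence a derivation of \<open>B\<^sup>\<box>\<close> from
  translated hypotheses \<open>\<Gamma>\<close> can be boxed, hypotheses included, and the boxed
  hypotheses are again derivable from \<open>\<Gamma>\<close>; this yields the boxed conjunct of the
  translation of an implication. With this introduction rule each axiom is
  checked separately, and modus ponens and necessitation commute with the
  translation.\<close>

inductive derivable :: "fm set \<Rightarrow> fm \<Rightarrow> bool" (infix "\<turnstile>" 55) where
  hyp: "A \<in> \<Gamma> \<Longrightarrow> \<Gamma> \<turnstile> A"
| iGL: "iGL A \<Longrightarrow> \<Gamma> \<turnstile> A"
| mp: "\<Gamma> \<turnstile> Imp A B \<Longrightarrow> \<Gamma> \<turnstile> A \<Longrightarrow> \<Gamma> \<turnstile> B"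

lemma derivable_empty_iff: "{} \<turnstile> A \<longleftrightarrow> iGL A"
proof
  show "{} \<turnstile> A \<Longrightarrow> iGL A"
    by (induction "{} :: fm set" A rule: derivable.induct) (auto intro: iGL.mp)
qed (rule derivable.iGL)

lemma iGL_Imp_refl: "iGL (Imp A A)"
  by (meson iGL.ax_k1 iGL.ax_s iGL.mp)

lemma derivable_deduction: "insert A \<Gamma> \<turnstile> B \<Longrightarrow> \<Gamma> \<turnstile> Imp A B"
proof (induction "insert A \<Gamma>" B rule: derivable.induct)
  case (hyp B)
  then show ?case
    by (metis derivable.hyp derivable.iGL derivable.mp iGL.ax_k1 iGL_Imp_refl insertE)
next
  case (iGL B)
  then show ?case by (meson derivable.iGL derivable.mp iGL.ax_k1)
next
  case (mp B C)
  then show ?case by (meson derivable.iGL derivable.mp iGL.ax_s)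
qed

lemma derivable_cut: "\<Gamma> \<turnstile> A \<Longrightarrow> (\<And>G. G \<in> \<Gamma> \<Longrightarrow> \<Delta> \<turnstile> G) \<Longrightarrow> \<Delta> \<turnstile> A"
  by (induction rule: derivable.induct) (auto intro: derivable.intros)

lemma derivable_iGL_mp: "iGL (Imp A B) \<Longrightarrow> \<Gamma> \<turnstile> A \<Longrightarrow> \<Gamma> \<turnstile> B"
  by (meson derivable.mp derivable.iGL)

lemma derivable_iGL_mp2: "iGL (Imp A (Imp B C)) \<Longrightarrow> \<Gamma> \<turnstile> A \<Longrightarrow> \<Gamma> \<turnstile> B \<Longrightarrow> \<Gamma> \<turnstile> C"
  by (meson derivable.mp derivable.iGL)

lemma derivable_AndI: "\<Gamma> \<turnstile> A \<Longrightarrow> \<Gamma> \<turnstile> B \<Longrightarrow> \<Gamma> \<turnstile> And A B"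
  by (rule derivable_iGL_mp2[OF iGL.ax_andI])

lemma derivable_AndD1: "\<Gamma> \<turnstile> And A B \<Longrightarrow> \<Gamma> \<turnstile> A"
  by (rule derivable_iGL_mp[OF iGL.ax_and1])

lemma derivable_AndD2: "\<Gamma> \<turnstile> And A B \<Longrightarrow> \<Gamma> \<turnstile> B"
  by (rule derivable_iGL_mp[OF iGL.ax_and2])

lemma derivable_OrE:
  assumes "\<Gamma> \<turnstile> Or A B" and "insert A \<Gamma> \<turnstile> C" and "insert B \<Gamma> \<turnstile> C"
  shows "\<Gamma> \<turnstile> C"
  by (meson assms derivable.mp derivable_iGL_mp2 derivable_deduction iGL.ax_orE)

lemma derivable_Box_mono: "iGL (Imp A B) \<Longrightarrow> \<Gamma> \<turnstile> Box A \<Longrightarrow> \<Gamma> \<turnstile> Box B"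
  by (rule derivable_iGL_mp[OF iGL.ax_K[THEN iGL.mp, OF iGL.nec]])

lemma derivable_Box_And: "\<Gamma> \<turnstile> Box A \<Longrightarrow> \<Gamma> \<turnstile> Box B \<Longrightarrow> \<Gamma> \<turnstile> Box (And A B)"
  by (meson derivable_Box_mono derivable_iGL_mp2 iGL.ax_K iGL.ax_andI)

lemma derivable_Box_image: "\<Gamma> \<turnstile> A \<Longrightarrow> Box ` \<Gamma> \<turnstile> Box A"
proof (induction rule: derivable.induct)
  case (mp \<Gamma> A B)
  from mp.IH show ?case by (rule derivable_iGL_mp2[OF iGL.ax_K])
qed (auto intro: derivable.intros iGL.nec)

lemma derivable_boxed_conj: "\<Gamma> \<turnstile> And A (Box A) \<Longrightarrow> \<Gamma> \<turnstile> Box (And A (Box A))"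
  by (meson derivable_AndD2 derivable_Box_And derivable_iGL_mp iGL.ax_4)

lemma boxtr_boxed: "\<Gamma> \<turnstile> boxtr A \<Longrightarrow> \<Gamma> \<turnstile> Box (boxtr A)"
proof (induction A arbitrary: \<Gamma>)
  case (And A B)
  then show ?case by (auto intro: derivable_Box_And dest: derivable_AndD1 derivable_AndD2)
next
  case (Or A B)
  have "insert (boxtr A) \<Gamma> \<turnstile> Box (Or (boxtr A) (boxtr B))"
    by (meson Or.IH(1) derivable.hyp derivable_Box_mono iGL.ax_or1 insertI1)
  moreover have "insert (boxtr B) \<Gamma> \<turnstile> Box (Or (boxtr A) (boxtr B))"
    by (meson Or.IH(2) derivable.hyp derivable_Box_mono iGL.ax_or2 insertI1)
  ultimately show ?case
    using Or.prems by (auto intro: derivable_OrE)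
next
  case (Box A)
  then show ?case by (auto intro: derivable_iGL_mp[OF iGL.ax_4])
qed (auto intro: derivable_boxed_conj)

lemma boxtr_ImpI:
  assumes "\<Gamma> \<subseteq> range boxtr" and "insert (boxtr A) \<Gamma> \<turnstile> boxtr B"
  shows "\<Gamma> \<turnstile> boxtr (Imp A B)"
proof -
  have imp: "\<Gamma> \<turnstile> Imp (boxtr A) (boxtr B)"
    using assms(2) by (rule derivable_deduction)
  have "\<Gamma> \<turnstile> G" if "G \<in> Box ` \<Gamma>" for G
    using that assms(1) by (auto intro: boxtr_boxed derivable.hyp)
  with derivable_Box_image[OF imp] have "\<Gamma> \<turnstile> Box (Imp (boxtr A) (boxtr B))"
    by (rule derivable_cut)
  with imp show ?thesis by (simp add: derivable_AndI)
qed

lemma iGL_boxtr_Imp_Imp: "iGL (Imp (boxtr (Imp A B)) (Imp (boxtr A) (boxtr B)))"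
  by (simp add: iGL.ax_and1)

lemma boxtr_ImpE: "\<Gamma> \<turnstile> boxtr (Imp A B) \<Longrightarrow> \<Gamma> \<turnstile> boxtr A \<Longrightarrow> \<Gamma> \<turnstile> boxtr B"
  by (rule derivable_iGL_mp2[OF iGL_boxtr_Imp_Imp])

lemma iGL_boxtr_ImpI: "{boxtr A} \<turnstile> boxtr B \<Longrightarrow> iGL (boxtr (Imp A B))"
  using boxtr_ImpI[of "{}"] derivable_empty_iff by auto

text \<open>Where nested implications are introduced or eliminated, \<open>boxtr\<close> is kept folded
  so that the hypotheses stay recognisable as translations.\<close>

lemma boxtr_ipc_axioms:
  shows "iGL (boxtr (Imp A (Imp B A)))"
    and "iGL (boxtr (Imp (Imp A (Imp B C)) (Imp (Imp A B) (Imp A C))))"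
    and "iGL (boxtr (Imp (And A B) A))"
    and "iGL (boxtr (Imp (And A B) B))"
    and "iGL (boxtr (Imp A (Imp B (And A B))))"
    and "iGL (boxtr (Imp A (Or A B)))"
    and "iGL (boxtr (Imp B (Or A B)))"
    and "iGL (boxtr (Imp (Imp A C) (Imp (Imp B C) (Imp (Or A B) C))))"
    and "iGL (boxtr (Imp Bot A))"
proof -
  show "iGL (boxtr (Imp A (Imp B A)))"
    by (intro iGL_boxtr_ImpI boxtr_ImpI) (auto simp del: boxtr.simps intro: derivable.hyp)
  show "iGL (boxtr (Imp (Imp A (Imp B C)) (Imp (Imp A B) (Imp A C))))"
    by (intro iGL_boxtr_ImpI boxtr_ImpI)
      (auto simp del: boxtr.simps intro: derivable.hyp boxtr_ImpE[of _ A] boxtr_ImpE[of _ B])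
  show "iGL (boxtr (Imp (And A B) A))"
    by (intro iGL_boxtr_ImpI boxtr_ImpI) (auto intro: derivable.hyp derivable_AndD1)
  show "iGL (boxtr (Imp (And A B) B))"
    by (intro iGL_boxtr_ImpI boxtr_ImpI) (auto intro: derivable.hyp derivable_AndD2)
  show "iGL (boxtr (Imp A (Imp B (And A B))))"
    by (intro iGL_boxtr_ImpI boxtr_ImpI) (auto intro: derivable.hyp derivable_AndI)
  show "iGL (boxtr (Imp A (Or A B)))"
    by (intro iGL_boxtr_ImpI) (auto intro: derivable.hyp derivable_iGL_mp[OF iGL.ax_or1])
  show "iGL (boxtr (Imp B (Or A B)))"
    by (intro iGL_boxtr_ImpI) (auto intro: derivable.hyp derivable_iGL_mp[OF iGL.ax_or2])
  show "iGL (boxtr (Imp (Imp A C) (Imp (Imp B C) (Imp (Or A B) C))))"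
  proof (intro iGL_boxtr_ImpI boxtr_ImpI)
    let ?\<Gamma> = "{boxtr (Or A B), boxtr (Imp B C), boxtr (Imp A C)}"
    have "?\<Gamma> \<turnstile> Or (boxtr A) (boxtr B)"
      by (auto intro: derivable.hyp)
    then show "?\<Gamma> \<turnstile> boxtr C"
      by (rule derivable_OrE)
        (auto simp del: boxtr.simps intro: derivable.hyp boxtr_ImpE[of _ A] boxtr_ImpE[of _ B])
  qed (auto simp del: boxtr.simps)
  show "iGL (boxtr (Imp Bot A))"
    by (intro iGL_boxtr_ImpI)
      (auto intro: derivable.hyp derivable_iGL_mp[OF iGL.ax_efq] derivable_AndD1)
qed

lemma boxtr_modal_axioms:
  shows "iGL (boxtr (Imp (Box (Imp A B)) (Imp (Box A) (Box B))))"
    and "iGL (boxtr (Imp (Box A) (Box (Box A))))"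
    and "iGL (boxtr (Imp (Box (Imp (Box A) A)) (Box A)))"
proof -
  show "iGL (boxtr (Imp (Box (Imp A B)) (Imp (Box A) (Box B))))"
  proof (intro iGL_boxtr_ImpI boxtr_ImpI)
    show "{boxtr (Box (Imp A B))} \<subseteq> range boxtr"
      by blast
  qed (auto simp del: boxtr.simps simp: boxtr.simps(6)
      intro: derivable.hyp derivable_iGL_mp2[OF iGL.ax_K] derivable_Box_mono[OF iGL_boxtr_Imp_Imp])
  show "iGL (boxtr (Imp (Box A) (Box (Box A))))"
    by (intro iGL_boxtr_ImpI) (auto intro: derivable.hyp derivable_iGL_mp[OF iGL.ax_4])
  show "iGL (boxtr (Imp (Box (Imp (Box A) A)) (Box A)))"
    by (intro iGL_boxtr_ImpI)
      (auto intro: derivable.hyp derivable_iGL_mp[OF iGL.ax_L]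
        derivable_Box_mono[OF iGL_boxtr_Imp_Imp[of "Box A" A, simplified]])
qed

theorem proposition4p16:
  fixes A :: fm
  assumes "iGL A"
  shows "iGL (boxtr A)"
  using assms
proof (induction rule: iGL.induct)
  case (mp A B)
  then show ?case
    using boxtr_ImpE derivable_empty_iff by blast
next
  case (nec A)
  then show ?case by (simp add: iGL.nec)
qed (fact boxtr_ipc_axioms boxtr_modal_axioms)+

end
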